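(* Let $d_n^B(x;1/2)$ be defined by $\sum_{n\ge0}d_n^B(x;1/2)\frac{z^n}{n!}=\left(\frac{(1-x)e^{z/2}}{e^{xz}-xe^{z}}\right)^{2}$. For $n\geq1$, $$d_n^B(x;1/2)=\frac{1}{x}d_{n+1}(x)+d_n(x),$$ and $$d_n^B(x;1/2)=\sum_{\pi\in\mathfrak{S}_{n+1}^s}x^{\mathrm{asc}(\pi)}.$$
   Context: $d_n(x)=\sum_{\pi}x^{\mathrm{exc}(\pi)}$ is the classical derangement polynomial, the sum over permutations $\pi\in\mathfrak{S}_n$ with no fixed points, where $\mathrm{exc}(\pi)=\#\{i:\pi(i)>i\}$ (with $d_0(x)=1$). For $\pi\in\mathfrak{S}_n$, an ascent is $i\in[n-1]$ with $\pi(i)<\pi(i+1)$, $\mathrm{asc}(\pi)$ is the number of ascents, and a succession is $i\in[n-1]$ with $\pi(i+1)=\pi(i)+1$; $\mathfrak{S}_n^s$ is the set of permutations in $\mathfrak{S}_n$ with no successions. *)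

theory Defs
  imports "HOL-Combinatorics.Combinatorics" "HOL-Computational_Algebra.Formal_Power_Series"
begin

text \<open>Permutations of [n] = {1..n} are functions permuting {1..n} (identity outside).\<close>

definition exc :: "nat \<Rightarrow> (nat \<Rightarrow> nat) \<Rightarrow> nat" where
  "exc n p = card {i \<in> {1..n}. p i > i}"

definition asc :: "nat \<Rightarrow> (nat \<Rightarrow> nat) \<Rightarrow> nat" where
  "asc n p = card {i \<in> {1..<n}. p i < p (i + 1)}"

definition no_succession :: "nat \<Rightarrow> (nat \<Rightarrow> nat) \<Rightarrow> bool" where
  "no_succession n p \<longleftrightarrow> (\<forall>i \<in> {1..<n}. p (i + 1) \<noteq> p i + 1)"

definition derangement_poly :: "nat \<Rightarrow> real \<Rightarrow> real" where
  "derangement_poly n x =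
     (\<Sum>p \<in> {p. p permutes {1..n} \<and> (\<forall>i \<in> {1..n}. p i \<noteq> i)}. x ^ exc n p)"

text \<open>d_n^B(x;1/2) via its exponential generating function in z, for fixed real x \<noteq> 1.\<close>
definition dB_half :: "nat \<Rightarrow> real \<Rightarrow> real" where
  "dB_half n x = fact n * fps_nth
     ((fps_const (1 - x) * fps_exp (1/2) / (fps_exp x - fps_const x * fps_exp 1)) ^ 2) n"

end

(*
  Both identities come from recurrences obtained by inserting the letter n + 1 into a permutation
  of [n]: into a cycle (composing with a transposition), which tracks excedances and fixed points,
  or into the one-line notation at some position, which tracks ascents and successions.  By strong
  induction these recurrences yield the decompositions of all permutations by their fixed points
  (resp. successions) into derangements (resp. succession-free permutations), and with them
  three-term recurrences for d_n(x) and for the ascent polynomial of succession-free permutations;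
  comparing the two gives that the latter, on [n + 1], equals d_(n+1)(x)/x + d_n(x).

  For the generating function D(z) = sum d_n(x) z^n/n!, the fixed-point decomposition together
  with the equidistribution of weak excedances and excedances plus one gives
  D(z) (e^(xz) - x e^z) = 1 - x.  Differentiating, D' + x D = x D^2 e^z, and D^2 e^z is exactly the
  series defining d_n^B(x;1/2); comparing coefficients of z^n gives the first identity.
*)

theory Submission
  imports Defs
begin

definition perms :: "nat \<Rightarrow> (nat \<Rightarrow> nat) set" where
  "perms n = {p. p permutes {1..n}}"

type_synonym perm_stat = "nat \<Rightarrow> (nat \<Rightarrow> nat) \<Rightarrow> nat"

definition fixpts :: perm_stat where
  "fixpts n p = card {i \<in> {1..n}. p i = i}"

definition succs :: perm_stat where
  "succs n p = card {i \<in> {1..<n}. p (i + 1) = p i + 1}"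

definition stat_sum :: "perm_stat \<Rightarrow> perm_stat \<Rightarrow> nat \<Rightarrow> (nat \<Rightarrow> nat \<Rightarrow> real) \<Rightarrow> real" where
  "stat_sum s t n G = (\<Sum>p\<in>perms n. G (s n p) (t n p))"

definition stat_sum0 :: "perm_stat \<Rightarrow> perm_stat \<Rightarrow> nat \<Rightarrow> (nat \<Rightarrow> real) \<Rightarrow> real" where
  "stat_sum0 s t n g = stat_sum s t n (\<lambda>a b. if b = 0 then g a else 0)"

abbreviation derangement_sum :: "nat \<Rightarrow> (nat \<Rightarrow> real) \<Rightarrow> real" where
  "derangement_sum \<equiv> stat_sum0 exc fixpts"

abbreviation no_succ_sum :: "nat \<Rightarrow> (nat \<Rightarrow> real) \<Rightarrow> real" where
  "no_succ_sum \<equiv> stat_sum0 asc succs"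

lemma finite_perms [simp]: "finite (perms n)"
  by (simp add: perms_def finite_permutations)

lemma perms_0: "perms 0 = {id}"
  and perms_1: "perms (Suc 0) = {id}"
  by (auto simp: perms_def)

lemma stat_sum_0: "stat_sum s t 0 G = G (s 0 id) (t 0 id)"
  by (simp add: stat_sum_def perms_0)

lemma stat_sum_1: "stat_sum s t (Suc 0) G = G (s (Suc 0) id) (t (Suc 0) id)"
  by (simp add: stat_sum_def perms_1)

lemma exc_0: "exc 0 p = 0"
  and fixpts_0: "fixpts 0 p = 0"
  and asc_1: "asc (Suc 0) p = 0"
  and succs_1: "succs (Suc 0) p = 0"
  by (simp_all add: exc_def fixpts_def asc_def succs_def)

lemma stat_sum_add: "stat_sum s t n (\<lambda>a b. G a b + H a b) = stat_sum s t n G + stat_sum s t n H"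
  by (simp add: stat_sum_def sum.distrib)

lemma stat_sum0_add: "stat_sum0 s t n (\<lambda>a. g a + h a) = stat_sum0 s t n g + stat_sum0 s t n h"
  by (auto simp: stat_sum0_def stat_sum_def sum.distrib[symmetric] intro!: sum.cong)

lemma stat_sum0_cmult: "stat_sum0 s t n (\<lambda>a. c * g a) = c * stat_sum0 s t n g"
  by (auto simp: stat_sum0_def stat_sum_def sum_distrib_left intro!: sum.cong)

lemma stat_sum0_zero: "stat_sum0 s t n (\<lambda>a. 0) = 0"
  using stat_sum0_cmult[of s t n 0 "\<lambda>a. 0"] by simp

lemma stat_sum0_if: "stat_sum0 s t n (\<lambda>a. if P then g a else 0) = (if P then stat_sum0 s t n g else 0)"
  by (simp add: stat_sum0_zero)

lemma stat_sum0_eq_sum: "stat_sum0 s t n g = (\<Sum>p \<in> {p \<in> perms n. t n p = 0}. g (s n p))"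
  by (simp add: stat_sum0_def stat_sum_def sum.inter_filter)

lemma sum_if_three_classes:
  fixes a b c :: "'a :: comm_ring_1"
  assumes "finite U" "A \<subseteq> U" "F \<subseteq> U" "A \<inter> F = {}"
  shows "(\<Sum>i\<in>U. if i \<in> A then a else if i \<in> F then b else c)
       = of_nat (card A) * a + of_nat (card F) * b + (of_nat (card U) - of_nat (card A) - of_nat (card F)) * c"
proof -
  have fin: "finite A" "finite F"
    using assms by (auto intro: finite_subset)
  have "(\<Sum>i\<in>U. if i \<in> A then a else if i \<in> F then b else c)
      = (\<Sum>i\<in>A \<union> F. if i \<in> A then a else b) + (\<Sum>i\<in>U - (A \<union> F). c)"
    using assms by (subst sum.subset_diff[of "A \<union> F" U]) (auto intro!: sum.cong)
  also have "(\<Sum>i\<in>A \<union> F. if i \<in> A then a else b) = (\<Sum>i\<in>A. a) + (\<Sum>i\<in>F. if i \<in> A then a else b)"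
    using assms fin by (simp add: sum.union_disjoint)
  also have "(\<Sum>i\<in>F. if i \<in> A then a else b) = (\<Sum>i\<in>F. b)"
    using assms by (intro sum.cong) auto
  also have "card (U - (A \<union> F)) = card U - (card A + card F)" "card A + card F \<le> card U"
    using assms fin card_mono[of U "A \<union> F"] by (simp_all add: card_Diff_subset card_Un_disjoint)
  ultimately show ?thesis
    by (simp add: of_nat_diff algebra_simps)
qed

lemma sum_if_four_classes:
  fixes a b c d :: "'a :: comm_ring_1"
  assumes "finite U" "C \<subseteq> A" "A \<subseteq> U" "B \<subseteq> U" "A \<inter> B = {}"
  shows "(\<Sum>i\<in>U. if i \<in> C then c else if i \<in> A then a else if i \<in> B then b else d)
       = of_nat (card C) * c + (of_nat (card A) - of_nat (card C)) * a + of_nat (card B) * b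
         + (of_nat (card U) - of_nat (card A) - of_nat (card B)) * d"
proof -
  have "(\<Sum>i\<in>U. if i \<in> C then c else if i \<in> A then a else if i \<in> B then b else d)
      = (\<Sum>i\<in>U. if i \<in> C then c - a else 0) + (\<Sum>i\<in>U. if i \<in> A then a else if i \<in> B then b else d)"
    using assms by (subst sum.distrib[symmetric]) (auto intro!: sum.cong)
  also have "(\<Sum>i\<in>U. if i \<in> C then c - a else 0) = of_nat (card C) * (c - a)"
    using assms by (simp add: sum.If_cases Int_absorb1)
  finally show ?thesis
    using assms by (simp add: sum_if_three_classes algebra_simps)
qed

text \<open>Composing with \<open>transpose (Suc n) b\<close> inserts \<open>Suc n\<close> into the cycle of \<open>q\<close> in front of \<open>b\<close>
  (as a new fixed point if \<open>b = Suc n\<close>). The point \<open>inv q b\<close> is then mapped to \<open>Suc n\<close>: it becomes an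
  excedance and is no longer fixed.\<close>

lemma
  assumes q: "q permutes {1..n}" and b: "b \<in> {1..n}"
  shows excedances_transpose_comp: "{i\<in>{1..Suc n}. (transpose (Suc n) b \<circ> q) i > i}
           = insert (inv q b) ({i\<in>{1..n}. q i > i} - {inv q b})"
    and fixed_points_transpose_comp: "{i\<in>{1..Suc n}. (transpose (Suc n) b \<circ> q) i = i}
           = {i\<in>{1..n}. q i = i} - {inv q b}"
proof -
  have q_inv: "q (inv q b) = b" "inv q b \<in> {1..n}"
    using q b permutes_in_image[OF permutes_inv[OF q]] by (auto simp: permutes_inverses(1))
  have q_top: "q (Suc n) = Suc n"
    using q by (intro permutes_not_in) auto
  have q_in: "q i \<in> {1..n}" if "i \<in> {1..n}" for i
    using permutes_in_image[OF q] that by simp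
  have q_eq_b: "q i = b \<longleftrightarrow> i = inv q b" if "i \<in> {1..n}" for i
    using q q_inv by (metis permutes_inverses(2))
  have "transpose (Suc n) b (q i) = (if i = inv q b then Suc n else q i)" if "i \<in> {1..n}" for i
    using q_in[OF that] q_eq_b[OF that] b by (auto simp: transpose_def)
  moreover have "transpose (Suc n) b (q (Suc n)) = b"
    using q_top by simp
  ultimately have r: "transpose (Suc n) b (q i) = (if i = Suc n then b else if i = inv q b then Suc n else q i)"
    if "i \<in> {1..Suc n}" for i
    using that by (cases "i = Suc n") (auto simp: le_Suc_eq)
  show "{i\<in>{1..Suc n}. (transpose (Suc n) b \<circ> q) i > i} = insert (inv q b) ({i\<in>{1..n}. q i > i} - {inv q b})"
    using b q_inv r by (auto simp: le_Suc_eq)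
  show "{i\<in>{1..Suc n}. (transpose (Suc n) b \<circ> q) i = i} = {i\<in>{1..n}. q i = i} - {inv q b}"
  proof (intro set_eqI iffI)
    fix i
    assume "i \<in> {i\<in>{1..Suc n}. (transpose (Suc n) b \<circ> q) i = i}"
    then show "i \<in> {i\<in>{1..n}. q i = i} - {inv q b}"
      using r[of i] b by (auto simp: le_Suc_eq split: if_splits)
  next
    fix i
    assume i: "i \<in> {i\<in>{1..n}. q i = i} - {inv q b}"
    then have "transpose (Suc n) b (q i) = q i"
      using r[of i] by auto
    then show "i \<in> {i\<in>{1..Suc n}. (transpose (Suc n) b \<circ> q) i = i}"
      using i by auto
  qed
qed

lemma sum_transpose_comp_exc_fixpts:
  fixes G :: "nat \<Rightarrow> nat \<Rightarrow> real"
  assumes q: "q permutes {1..n}"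
  shows "(\<Sum>b\<in>{1..Suc n}. G (exc (Suc n) (transpose (Suc n) b \<circ> q)) (fixpts (Suc n) (transpose (Suc n) b \<circ> q)))
    = G (exc n q) (fixpts n q + 1) + fixpts n q * G (exc n q + 1) (fixpts n q - 1) + exc n q * G (exc n q) (fixpts n q)
      + (real n - exc n q - fixpts n q) * G (exc n q + 1) (fixpts n q)"
proof -
  let ?h = "\<lambda>b. G (exc (Suc n) (transpose (Suc n) b \<circ> q)) (fixpts (Suc n) (transpose (Suc n) b \<circ> q))"
  define A where "A = {i\<in>{1..n}. q i > i}"
  define F where "F = {i\<in>{1..n}. q i = i}"
  have q_top: "q (Suc n) = Suc n"
    using q by (intro permutes_not_in) auto
  have exc: "exc n q = card A" "exc (Suc n) q = card A"
    using q_top by (auto simp: exc_def A_def le_Suc_eq intro!: arg_cong[where f=card])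
  have "{i \<in> {1..Suc n}. q i = i} = insert (Suc n) F"
    using q_top by (auto simp: F_def)
  then have fixpts_q: "fixpts n q = card F" "fixpts (Suc n) q = card F + 1"
    by (simp_all add: fixpts_def F_def)
  have "exc (Suc n) (transpose (Suc n) b \<circ> q) = card (insert (inv q b) (A - {inv q b}))"
       "fixpts (Suc n) (transpose (Suc n) b \<circ> q) = card (F - {inv q b})" if "b \<in> {1..n}" for b
    unfolding exc_def fixpts_def excedances_transpose_comp[OF q that] fixed_points_transpose_comp[OF q that]
      A_def F_def by (rule refl)+
  then have "sum ?h {1..n} = (\<Sum>b\<in>{1..n}. G (card (insert (inv q b) (A - {inv q b}))) (card (F - {inv q b})))"
    by (intro sum.cong) simp_all
  also have "\<dots> = (\<Sum>i\<in>{1..n}. G (card (insert i (A - {i}))) (card (F - {i})))"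
    using sum.reindex_bij_betw[OF permutes_imp_bij[OF q],
        of "\<lambda>b. G (card (insert (inv q b) (A - {inv q b}))) (card (F - {inv q b}))"]
    by (simp add: permutes_inverses(2)[OF q])
  also have "\<dots> = (\<Sum>i\<in>{1..n}. if i \<in> A then G (card A) (card F)
                    else if i \<in> F then G (card A + 1) (card F - 1) else G (card A + 1) (card F))"
    by (intro sum.cong refl) (auto simp: A_def F_def card_insert_if card_Diff_singleton_if)
  also have "\<dots> = card A * G (card A) (card F) + card F * G (card A + 1) (card F - 1)
                  + (real n - card A - card F) * G (card A + 1) (card F)"
    by (subst sum_if_three_classes) (auto simp: A_def F_def)
  finally have "sum ?h {1..n} = \<dots>" .
  moreover have "{1..Suc n} = insert (Suc n) {1..n}"
    by auto
  ultimately show ?thesis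
    by (simp add: exc fixpts_q algebra_simps)
qed

lemma stat_sum_exc_fixpts_Suc:
  fixes G :: "nat \<Rightarrow> nat \<Rightarrow> real"
  shows "stat_sum exc fixpts (Suc n) G = stat_sum exc fixpts n
     (\<lambda>e f. G e (f + 1) + f * G (e + 1) (f - 1) + e * G e f + (real n - e - f) * G (e + 1) f)"
proof -
  have ins: "{1..Suc n} = insert (Suc n) {1..n}"
    by auto
  have "stat_sum exc fixpts (Suc n) G = (\<Sum>b\<in>{1..Suc n}. \<Sum>q\<in>perms n.
      G (exc (Suc n) (transpose (Suc n) b \<circ> q)) (fixpts (Suc n) (transpose (Suc n) b \<circ> q)))"
    unfolding stat_sum_def perms_def ins by (rule sum_over_permutations_insert) auto
  also have "\<dots> = (\<Sum>q\<in>perms n. \<Sum>b\<in>{1..Suc n}.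
      G (exc (Suc n) (transpose (Suc n) b \<circ> q)) (fixpts (Suc n) (transpose (Suc n) b \<circ> q)))"
    by (rule sum.swap)
  also have "\<dots> = stat_sum exc fixpts n
     (\<lambda>e f. G e (f + 1) + f * G (e + 1) (f - 1) + e * G e f + (real n - e - f) * G (e + 1) f)"
    unfolding stat_sum_def by (intro sum.cong refl sum_transpose_comp_exc_fixpts) (simp add: perms_def)
  finally show ?thesis .
qed

text \<open>For \<open>p permutes {1..n}\<close> and \<open>j \<in> {1..Suc n}\<close>, the one-line notation of \<open>p \<circ> ins_pos n j\<close>
  is that of \<open>p\<close> with the letter \<open>Suc n\<close> inserted at position \<open>j\<close>.\<close>

definition ins_pos :: "nat \<Rightarrow> nat \<Rightarrow> nat \<Rightarrow> nat" where
  "ins_pos n j i = (if i < j \<or> i > Suc n then i else if i = j then Suc n else i - 1)"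

definition del_pos :: "nat \<Rightarrow> nat \<Rightarrow> nat \<Rightarrow> nat" where
  "del_pos n j i = (if i < j \<or> i > Suc n then i else if i = Suc n then j else i + 1)"

lemma ins_pos_del_pos: "j \<in> {1..Suc n} \<Longrightarrow> ins_pos n j (del_pos n j i) = i"
  and del_pos_ins_pos: "j \<in> {1..Suc n} \<Longrightarrow> del_pos n j (ins_pos n j i) = i"
  by (auto simp: ins_pos_def del_pos_def)

lemma ins_pos_permutes:
  assumes "j \<in> {1..Suc n}"
  shows "ins_pos n j permutes {1..Suc n}"
  unfolding permutes_def
proof (intro conjI allI impI)
  show "ins_pos n j x = x" if "x \<notin> {1..Suc n}" for x
    using that assms by (auto simp: ins_pos_def)
  show "\<exists>!x. ins_pos n j x = y" for y
    using ins_pos_del_pos[OF assms] del_pos_ins_pos[OF assms] by metis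
qed

lemma del_pos_permutes:
  assumes "j \<in> {1..Suc n}"
  shows "del_pos n j permutes {1..Suc n}"
  unfolding permutes_def
proof (intro conjI allI impI)
  show "del_pos n j x = x" if "x \<notin> {1..Suc n}" for x
    using that assms by (auto simp: del_pos_def)
  show "\<exists>!x. del_pos n j x = y" for y
    using ins_pos_del_pos[OF assms] del_pos_ins_pos[OF assms] by metis
qed

lemma inj_on_comp_ins_pos: "inj_on (\<lambda>(p, j). p \<circ> ins_pos n j) (perms n \<times> {1..Suc n})"
proof (rule inj_onI, clarify)
  fix p j p' j'
  assume p: "p \<in> perms n" and j: "j \<in> {1..Suc n}" and p': "p' \<in> perms n" and j': "j' \<in> {1..Suc n}"
    and eq: "p \<circ> ins_pos n j = p' \<circ> ins_pos n j'"
  have top: "p (Suc n) = Suc n" "p' (Suc n) = Suc n"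
    using p p' by (auto simp: perms_def intro: permutes_not_in)
  have ins_j: "ins_pos n j j = Suc n" "ins_pos n j' j' = Suc n"
    using j j' by (simp_all add: ins_pos_def)
  have "inj (p \<circ> ins_pos n j)"
    using p ins_pos_permutes[OF j] by (auto simp: perms_def intro: inj_compose permutes_inj)
  moreover have "(p \<circ> ins_pos n j) j' = (p \<circ> ins_pos n j) j"
    using fun_cong[OF eq, of j'] top ins_j by simp
  ultimately have "j = j'"
    by (simp only: inj_eq)
  moreover have "p = p'"
  proof
    fix x
    show "p x = p' x"
      using fun_cong[OF eq, of "del_pos n j x"] \<open>j = j'\<close> ins_pos_del_pos[OF j] by simp
  qed
  ultimately show "p = p' \<and> j = j'"
    by simp
qed

lemma image_comp_ins_pos: "(\<lambda>(p, j). p \<circ> ins_pos n j) ` (perms n \<times> {1..Suc n}) = perms (Suc n)"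
proof (intro set_eqI iffI)
  fix s
  assume "s \<in> (\<lambda>(p, j). p \<circ> ins_pos n j) ` (perms n \<times> {1..Suc n})"
  then obtain p j where p: "p permutes {1..n}" and j: "j \<in> {1..Suc n}" and s: "s = p \<circ> ins_pos n j"
    by (auto simp: perms_def)
  have "p permutes {1..Suc n}"
    using p by (rule permutes_subset) auto
  then show "s \<in> perms (Suc n)"
    unfolding s perms_def using ins_pos_permutes[OF j] by (simp add: permutes_compose)
next
  fix s
  assume "s \<in> perms (Suc n)"
  then have s: "s permutes {1..Suc n}"
    by (simp add: perms_def)
  define j where "j = inv s (Suc n)"
  have j: "j \<in> {1..Suc n}"
    unfolding j_def using permutes_in_image[OF permutes_inv[OF s], of "Suc n"] by simp
  define p where "p = s \<circ> del_pos n j"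
  have "p permutes {1..Suc n}"
    unfolding p_def using s del_pos_permutes[OF j] by (rule permutes_compose[rotated])
  moreover have "p (Suc n) = Suc n"
    using s j by (simp add: p_def j_def del_pos_def permutes_inverses(1))
  ultimately have "p \<in> perms n"
    unfolding perms_def by (auto intro: permutes_superset simp: le_Suc_eq)
  moreover have "s = p \<circ> ins_pos n j"
    unfolding p_def using del_pos_ins_pos[OF j] by (auto simp: fun_eq_iff)
  ultimately show "s \<in> (\<lambda>(p, j). p \<circ> ins_pos n j) ` (perms n \<times> {1..Suc n})"
    using j by (intro image_eqI[where x="(p, j)"]) auto
qed

lemma bij_betw_comp_ins_pos:
  "bij_betw (\<lambda>(p, j). p \<circ> ins_pos n j) (perms n \<times> {1..Suc n}) (perms (Suc n))"
  by (rule bij_betw_imageI[OF inj_on_comp_ins_pos image_comp_ins_pos])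

lemma sum_perms_Suc_ins_pos:
  "(\<Sum>s\<in>perms (Suc n). F s) = (\<Sum>p\<in>perms n. \<Sum>j\<in>{1..Suc n}. F (p \<circ> ins_pos n j))"
proof -
  have "(\<Sum>s\<in>perms (Suc n). F s) = (\<Sum>x\<in>perms n \<times> {1..Suc n}. F ((\<lambda>(p, j). p \<circ> ins_pos n j) x))"
    by (rule sum.reindex_bij_betw[OF bij_betw_comp_ins_pos, symmetric])
  also have "\<dots> = (\<Sum>(p, j)\<in>perms n \<times> {1..Suc n}. F (p \<circ> ins_pos n j))"
    by (intro sum.cong) auto
  finally show ?thesis
    by (simp only: sum.cartesian_product)
qed

definition adj_count :: "nat \<Rightarrow> (nat \<Rightarrow> nat) \<Rightarrow> (nat \<Rightarrow> nat \<Rightarrow> bool) \<Rightarrow> nat" where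
  "adj_count m p R = card {i\<in>{1..<m}. R (p i) (p (i + 1))}"

lemma asc_eq_adj_count: "asc m p = adj_count m p (<)"
  by (simp add: asc_def adj_count_def)

lemma succs_eq_adj_count: "succs m p = adj_count m p (\<lambda>a b. b = a + 1)"
  by (simp add: succs_def adj_count_def)

lemma adjacencies_comp_ins_pos:
  assumes top: "p (Suc n) = Suc n" and j: "j \<in> {1..Suc n}"
  shows "{i\<in>{1..<Suc n}. R ((p \<circ> ins_pos n j) i) ((p \<circ> ins_pos n j) (i + 1))}
      = {i\<in>{1..<n}. i + 1 < j \<and> R (p i) (p (i + 1))} \<union> {i. 2 \<le> j \<and> i = j - 1 \<and> R (p (j - 1)) (Suc n)}
        \<union> {i. j \<le> n \<and> i = j \<and> R (Suc n) (p j)} \<union> Suc ` {i\<in>{1..<n}. j \<le> i \<and> R (p i) (p (i + 1))}"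
    (is "?new = ?before \<union> ?left \<union> ?right \<union> Suc ` ?after")
proof (intro set_eqI)
  fix i
  have ins_lt: "ins_pos n j i = i" if "i < j" for i
    using that by (simp add: ins_pos_def)
  have ins_eq: "ins_pos n j j = Suc n"
    using j by (simp add: ins_pos_def)
  have ins_gt: "ins_pos n j i = i - 1" if "j < i" "i \<le> Suc n" for i
    using that by (simp add: ins_pos_def)
  consider "i + 1 < j" | "i + 1 = j" | "i = j" | "j < i"
    by linarith
  then show "i \<in> ?new \<longleftrightarrow> i \<in> ?before \<union> ?left \<union> ?right \<union> Suc ` ?after"
  proof cases
    case 1
    then show ?thesis
      using j by (auto simp: ins_lt)
  next
    case 2
    then show ?thesis
      using j top by (auto simp: ins_lt ins_eq)
  next
    case 3
    then show ?thesis
      using j top by (auto simp: ins_gt ins_eq)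
  next
    case 4
    then show ?thesis
      using j by (cases i) (auto simp: ins_gt)
  qed
qed

text \<open>Inserting the letter \<open>Suc n\<close> at position \<open>j\<close> destroys the adjacency \<open>(p (j - 1), p j)\<close>
  and creates \<open>(p (j - 1), Suc n)\<close> and \<open>(Suc n, p j)\<close>; the destroyed one is counted on the left
  to avoid truncated subtraction.\<close>

lemma adj_count_comp_ins_pos:
  assumes top: "p (Suc n) = Suc n" and j: "j \<in> {1..Suc n}"
  shows "adj_count (Suc n) (p \<circ> ins_pos n j) R + (if 2 \<le> j \<and> j \<le> n \<and> R (p (j - 1)) (p j) then 1 else 0)
       = adj_count n p R + (if 2 \<le> j \<and> R (p (j - 1)) (Suc n) then 1 else 0)
         + (if j \<le> n \<and> R (Suc n) (p j) then 1 else 0)"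
proof -
  define before where "before = {i\<in>{1..<n}. i + 1 < j \<and> R (p i) (p (i + 1))}"
  define left where "left = {i. 2 \<le> j \<and> i = j - 1 \<and> R (p (j - 1)) (Suc n)}"
  define right where "right = {i. j \<le> n \<and> i = j \<and> R (Suc n) (p j)}"
  define after where "after = {i\<in>{1..<n}. j \<le> i \<and> R (p i) (p (i + 1))}"
  define broken where "broken = {i. 2 \<le> j \<and> j \<le> n \<and> i = j - 1 \<and> R (p (j - 1)) (p j)}"
  have new: "{i\<in>{1..<Suc n}. R ((p \<circ> ins_pos n j) i) ((p \<circ> ins_pos n j) (i + 1))}
      = before \<union> left \<union> right \<union> Suc ` after"
    unfolding before_def left_def right_def after_def by (rule adjacencies_comp_ins_pos[of p n j R, OF top j])
  have old: "{i\<in>{1..<n}. R (p i) (p (i + 1))} = before \<union> broken \<union> after"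
  proof (intro set_eqI)
    fix i
    consider "i + 1 < j" | "i + 1 = j" | "j \<le> i"
      by linarith
    then show "i \<in> {i\<in>{1..<n}. R (p i) (p (i + 1))} \<longleftrightarrow> i \<in> before \<union> broken \<union> after"
    proof cases
      case 2
      then have "i = j - 1" "j = i + 1"
        by auto
      then show ?thesis
        by (auto simp: before_def broken_def after_def)
    qed (auto simp: before_def broken_def after_def)
  qed
  have fin: "finite before" "finite left" "finite right" "finite after" "finite broken"
    by (auto simp: before_def left_def right_def after_def broken_def)
  have "card (before \<union> left \<union> right \<union> Suc ` after) = card before + card left + card right + card after"
    using fin by (subst card_Un_disjoint, simp, simp, force simp: before_def left_def right_def after_def)+
      (simp add: card_image)
  moreover have "card (before \<union> broken \<union> after) = card before + card broken + card after"
    using fin by (subst card_Un_disjoint, simp, simp, force simp: before_def broken_def after_def)+ simp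
  ultimately show ?thesis
    unfolding adj_count_def new old by (simp add: left_def right_def broken_def)
qed

lemma
  assumes q: "q permutes {1..n}" and k: "k \<in> {1..n}"
  shows asc_comp_ins_pos_Suc: "asc (Suc n) (q \<circ> ins_pos n (Suc k))
           = (if k < n \<and> q k < q (k + 1) then asc n q else asc n q + 1)"
    and succs_comp_ins_pos_Suc: "succs (Suc n) (q \<circ> ins_pos n (Suc k))
           = (if k < n \<and> q (k + 1) = q k + 1 then succs n q - 1 else if q k = n then succs n q + 1 else succs n q)"
proof -
  have top: "q (Suc n) = Suc n"
    using q by (intro permutes_not_in) auto
  have q_le: "q i \<le> n" if "i \<in> {1..n}" for i
    using permutes_in_image[OF q, of i] that by simp
  have j: "Suc k \<in> {1..Suc n}"
    using k by simp
  show "asc (Suc n) (q \<circ> ins_pos n (Suc k)) = (if k < n \<and> q k < q (k + 1) then asc n q else asc n q + 1)"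
    using adj_count_comp_ins_pos[of q n "Suc k" "(<)", OF top j] k q_le[of k] q_le[of "k + 1"]
    by (auto simp: asc_eq_adj_count split: if_splits)
  show "succs (Suc n) (q \<circ> ins_pos n (Suc k))
      = (if k < n \<and> q (k + 1) = q k + 1 then succs n q - 1 else if q k = n then succs n q + 1 else succs n q)"
    using adj_count_comp_ins_pos[of q n "Suc k" "\<lambda>a b. b = a + 1", OF top j] k q_le[of k] q_le[of "k + 1"]
    by (auto simp: succs_eq_adj_count split: if_splits)
qed

lemma
  assumes q: "q permutes {1..n}" and n: "n \<ge> 1"
  shows asc_comp_ins_pos_1: "asc (Suc n) (q \<circ> ins_pos n 1) = asc n q"
    and succs_comp_ins_pos_1: "succs (Suc n) (q \<circ> ins_pos n 1) = succs n q"
proof -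
  have top: "q (Suc n) = Suc n"
    using q by (intro permutes_not_in) auto
  have "q 1 \<le> n"
    using permutes_in_image[OF q, of 1] n by simp
  then show "asc (Suc n) (q \<circ> ins_pos n 1) = asc n q" "succs (Suc n) (q \<circ> ins_pos n 1) = succs n q"
    using adj_count_comp_ins_pos[of q n 1 "(<)", OF top] adj_count_comp_ins_pos[of q n 1 "\<lambda>a b. b = a + 1", OF top]
    by (auto simp: asc_eq_adj_count succs_eq_adj_count)
qed

lemma sum_ins_pos_Suc_asc_succs:
  fixes G :: "nat \<Rightarrow> nat \<Rightarrow> real"
  assumes q: "q permutes {1..n}" and n: "n \<ge> 1"
  defines "a \<equiv> asc n q" and "s \<equiv> succs n q"
  shows "(\<Sum>k\<in>{1..n}. G (asc (Suc n) (q \<circ> ins_pos n (Suc k))) (succs (Suc n) (q \<circ> ins_pos n (Suc k))))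
    = real s * G a (s - 1) + (real a - real s) * G a s + G (a + 1) (s + 1) + (real n - real a - 1) * G (a + 1) s"
proof -
  define ascents where "ascents = {k\<in>{1..n}. k < n \<and> q k < q (k + 1)}"
  define successions where "successions = {k\<in>{1..n}. k < n \<and> q (k + 1) = q k + 1}"
  define top where "top = {k\<in>{1..n}. q k = n}"
  have q_le: "q i \<le> n" if "i \<in> {1..n}" for i
    using permutes_in_image[OF q, of i] that by simp
  have card_ascents: "card ascents = a"
    unfolding a_def asc_def ascents_def by (rule arg_cong[where f=card]) auto
  have card_successions: "card successions = s"
    unfolding s_def succs_def successions_def by (rule arg_cong[where f=card]) auto
  have "top = {inv q n}"
    using q n permutes_in_image[OF permutes_inv[OF q], of n]
    by (auto simp: top_def permutes_inverses[OF q])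
  then have card_top: "card top = 1"
    by simp
  have successions_ascents: "successions \<subseteq> ascents"
    by (auto simp: successions_def ascents_def)
  have "q (k + 1) \<le> n" if "k \<in> ascents" for k
    using that q_le[of "k + 1"] by (auto simp: ascents_def)
  then have ascents_top: "ascents \<inter> top = {}"
    by (fastforce simp: ascents_def top_def)
  have "(\<Sum>k\<in>{1..n}. G (asc (Suc n) (q \<circ> ins_pos n (Suc k))) (succs (Suc n) (q \<circ> ins_pos n (Suc k))))
      = (\<Sum>k\<in>{1..n}. if k \<in> successions then G a (s - 1) else if k \<in> ascents then G a s
                      else if k \<in> top then G (a + 1) (s + 1) else G (a + 1) s)"
    using successions_ascents ascents_top
    by (intro sum.cong refl)
      (auto simp: asc_comp_ins_pos_Suc[OF q] succs_comp_ins_pos_Suc[OF q] a_def s_def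
        successions_def ascents_def top_def)
  also have "ascents \<subseteq> {1..n}" "top \<subseteq> {1..n}"
    by (auto simp: ascents_def top_def)
  ultimately show ?thesis
    using successions_ascents ascents_top
    by (simp add: sum_if_four_classes card_ascents card_successions card_top)
qed

lemma sum_ins_pos_asc_succs:
  fixes G :: "nat \<Rightarrow> nat \<Rightarrow> real"
  assumes q: "q permutes {1..n}" and n: "n \<ge> 1"
  shows "(\<Sum>j\<in>{1..Suc n}. G (asc (Suc n) (q \<circ> ins_pos n j)) (succs (Suc n) (q \<circ> ins_pos n j)))
    = (1 + real (asc n q) - real (succs n q)) * G (asc n q) (succs n q)
      + real (succs n q) * G (asc n q) (succs n q - 1)
      + (real n - 1 - real (asc n q)) * G (asc n q + 1) (succs n q)
      + G (asc n q + 1) (succs n q + 1)"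
proof -
  let ?h = "\<lambda>j. G (asc (Suc n) (q \<circ> ins_pos n j)) (succs (Suc n) (q \<circ> ins_pos n j))"
  have "sum ?h {1..Suc n} = ?h 1 + sum ?h {Suc 1..Suc n}"
    by (rule sum.atLeast_Suc_atMost) simp
  also have "?h 1 = G (asc n q) (succs n q)"
    using asc_comp_ins_pos_1[OF q n] succs_comp_ins_pos_1[OF q n] by simp
  also have "sum ?h {Suc 1..Suc n} = (\<Sum>k\<in>{1..n}. ?h (Suc k))"
    by (rule sum.shift_bounds_cl_Suc_ivl)
  also have "\<dots> = real (succs n q) * G (asc n q) (succs n q - 1) + (real (asc n q) - real (succs n q)) * G (asc n q) (succs n q)
      + G (asc n q + 1) (succs n q + 1) + (real n - real (asc n q) - 1) * G (asc n q + 1) (succs n q)"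
    by (rule sum_ins_pos_Suc_asc_succs[OF q n])
  finally show ?thesis
    by (rule trans) (simp add: algebra_simps)
qed

lemma stat_sum_asc_succs_Suc:
  fixes G :: "nat \<Rightarrow> nat \<Rightarrow> real"
  assumes "n \<ge> 1"
  shows "stat_sum asc succs (Suc n) G = stat_sum asc succs n (\<lambda>a s. (1 + real a - real s) * G a s
      + real s * G a (s - 1) + (real n - 1 - real a) * G (a + 1) s + G (a + 1) (s + 1))"
  unfolding stat_sum_def sum_perms_Suc_ins_pos
  using assms by (intro sum.cong refl sum_ins_pos_asc_succs) (auto simp: perms_def)

lemma sum_Suc_choose_split:
  fixes f :: "nat \<Rightarrow> 'a :: comm_semiring_1"
  shows "(\<Sum>k\<le>Suc n. of_nat (Suc n choose k) * f k)
       = (\<Sum>k\<le>n. of_nat (n choose k) * f k) + (\<Sum>k\<le>n. of_nat (n choose k) * f (Suc k))"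
proof -
  have "(\<Sum>k\<le>Suc n. of_nat (Suc n choose k) * f k)
      = f 0 + (\<Sum>k\<le>n. of_nat (n choose Suc k) * f (Suc k)) + (\<Sum>k\<le>n. of_nat (n choose k) * f (Suc k))"
    by (subst sum.atMost_Suc_shift) (simp add: sum.distrib[symmetric] algebra_simps)
  also have "f 0 + (\<Sum>k\<le>n. of_nat (n choose Suc k) * f (Suc k)) = (\<Sum>k\<le>Suc n. of_nat (n choose k) * f k)"
    by (subst sum.atMost_Suc_shift) simp
  also have "\<dots> = (\<Sum>k\<le>n. of_nat (n choose k) * f k)"
    by (simp add: binomial_eq_0)
  finally show ?thesis .
qed

lemma sum_choose_absorb_shift:
  fixes h :: "nat \<Rightarrow> 'a :: comm_semiring_1"
  shows "(\<Sum>k\<le>n. of_nat (n choose k) * (of_nat (n - k) * h k))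
       = (\<Sum>k\<le>n. of_nat (n choose k) * (of_nat k * h (k - 1)))"
proof (cases n)
  case (Suc m)
  have absorb: "(n choose k) * (n - k) = (n choose Suc k) * Suc k" for k
    using binomial_absorb_comp[of n k] binomial_absorption[of k n] by (simp add: mult.commute)
  have bound: "{..n} = {..Suc m}"
    by (simp add: Suc)
  have "(\<Sum>k\<le>n. of_nat (n choose k) * (of_nat (n - k) * h k))
      = (\<Sum>k\<le>m. of_nat (n choose k) * (of_nat (n - k) * h k))"
    unfolding bound by (simp only: sum.atMost_Suc) (simp add: Suc)
  also have "\<dots> = (\<Sum>k\<le>m. of_nat (n choose Suc k) * (of_nat (Suc k) * h k))"
    by (intro sum.cong refl) (simp only: mult.assoc[symmetric] of_nat_mult[symmetric] absorb)
  also have "\<dots> = (\<Sum>k\<le>n. of_nat (n choose k) * (of_nat k * h (k - 1)))"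
    unfolding bound by (subst sum.atMost_Suc_shift) simp
  finally show ?thesis .
qed simp

text \<open>The recurrence for derangements needs the fixed-point decomposition only up to size \<open>k\<close>, so
  the two are established together by strong induction.\<close>

lemma derangement_sum_Suc_if_decomp:
  assumes decomp: "\<And>G. stat_sum exc fixpts k G
      = (\<Sum>i\<le>k. real (k choose i) * derangement_sum i (\<lambda>e. G e (k - i)))"
  shows "derangement_sum (Suc k) g = derangement_sum k (\<lambda>e. real e * g e + (real k - real e) * g (e + 1))
           + real k * derangement_sum (k - 1) (\<lambda>e. g (e + 1))"
proof -
  have "derangement_sum (Suc k) g = stat_sum exc fixpts k (\<lambda>e f. (if f = 1 then g (e + 1) else 0)
          + (if f = 0 then real e * g e + (real k - real e) * g (e + 1) else 0))"
    unfolding stat_sum0_def stat_sum_exc_fixpts_Suc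
    by (rule arg_cong[where f="stat_sum exc fixpts k"]) (auto simp: fun_eq_iff)
  also have "\<dots> = stat_sum exc fixpts k (\<lambda>e f. if f = 1 then g (e + 1) else 0)
          + derangement_sum k (\<lambda>e. real e * g e + (real k - real e) * g (e + 1))"
    unfolding stat_sum0_def by (rule stat_sum_add)
  also have "stat_sum exc fixpts k (\<lambda>e f. if f = 1 then g (e + 1) else 0)
      = (\<Sum>i\<le>k. real (k choose i) * derangement_sum i (\<lambda>e. if k - i = 1 then g (e + 1) else 0))"
    by (rule decomp)
  also have "\<dots> = (\<Sum>i\<le>k. if i = k - 1 \<and> 1 \<le> k then real (k choose i) * derangement_sum i (\<lambda>e. g (e + 1)) else 0)"
    by (intro sum.cong refl) (auto simp: stat_sum0_if)
  also have "\<dots> = real k * derangement_sum (k - 1) (\<lambda>e. g (e + 1))"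
    by (cases k) (simp_all add: sum.delta')
  finally show ?thesis
    by linarith
qed

lemma stat_sum_exc_fixpts_decomp_Suc:
  fixes G :: "nat \<Rightarrow> nat \<Rightarrow> real"
  assumes decomp: "\<And>k G. k \<le> n \<Longrightarrow> stat_sum exc fixpts k G
      = (\<Sum>i\<le>k. real (k choose i) * derangement_sum i (\<lambda>e. G e (k - i)))"
  shows "stat_sum exc fixpts (Suc n) G
      = (\<Sum>k\<le>Suc n. real (Suc n choose k) * derangement_sum k (\<lambda>e. G e (Suc n - k)))"
proof -
  define h where "h k = derangement_sum k (\<lambda>e. G (e + 1) (n - k - 1))" for k
  define D where "D k = derangement_sum k (\<lambda>e. G e (Suc n - k))" for k
  have summand: "derangement_sum k (\<lambda>e. G e (n - k + 1) + real (n - k) * G (e + 1) (n - k - 1)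
        + real e * G e (n - k) + (real n - real e - real (n - k)) * G (e + 1) (n - k))
      = D k + D (Suc k) + (real (n - k) * h k - real k * h (k - 1))" if k: "k \<le> n" for k
  proof -
    have "(\<lambda>e. G e (n - k + 1) + real (n - k) * G (e + 1) (n - k - 1)
            + real e * G e (n - k) + (real n - real e - real (n - k)) * G (e + 1) (n - k))
        = (\<lambda>e. G e (Suc n - k) + (real (n - k) * G (e + 1) (n - k - 1)
            + (real e * G e (n - k) + (real k - real e) * G (e + 1) (n - k))))"
      using k by (auto simp: fun_eq_iff of_nat_diff Suc_diff_le algebra_simps)
    moreover have "real k * derangement_sum (k - 1) (\<lambda>e. G (e + 1) (n - k)) = real k * h (k - 1)"
      by (cases k) (simp_all add: h_def)
    ultimately show ?thesis
      using derangement_sum_Suc_if_decomp[OF decomp[OF k], of "\<lambda>e. G e (n - k)"]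
      by (simp add: stat_sum0_add stat_sum0_cmult D_def h_def)
  qed
  have "stat_sum exc fixpts (Suc n) G = stat_sum exc fixpts n
      (\<lambda>e f. G e (f + 1) + f * G (e + 1) (f - 1) + e * G e f + (real n - e - f) * G (e + 1) f)"
    by (rule stat_sum_exc_fixpts_Suc)
  also have "\<dots> = (\<Sum>k\<le>n. real (n choose k) * derangement_sum k (\<lambda>e. G e (n - k + 1)
      + real (n - k) * G (e + 1) (n - k - 1) + real e * G e (n - k) + (real n - real e - real (n - k)) * G (e + 1) (n - k)))"
    by (rule decomp[OF order.refl])
  also have "\<dots> = (\<Sum>k\<le>n. real (n choose k) * (D k + D (Suc k) + (real (n - k) * h k - real k * h (k - 1))))"
    using summand by (intro sum.cong refl) simp
  also have "\<dots> = (\<Sum>k\<le>n. real (n choose k) * D k) + (\<Sum>k\<le>n. real (n choose k) * D (Suc k))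
      + ((\<Sum>k\<le>n. real (n choose k) * (real (n - k) * h k)) - (\<Sum>k\<le>n. real (n choose k) * (real k * h (k - 1))))"
    by (simp only: distrib_left right_diff_distrib sum.distrib sum_subtractf)
  also have "\<dots> = (\<Sum>k\<le>Suc n. real (Suc n choose k) * D k)"
    by (simp only: sum_choose_absorb_shift sum_Suc_choose_split diff_self add_0_right)
  finally show ?thesis
    by (simp add: D_def)
qed

lemma stat_sum_exc_fixpts_decomp:
  "stat_sum exc fixpts m G = (\<Sum>k\<le>m. real (m choose k) * derangement_sum k (\<lambda>e. G e (m - k)))"
proof (induction m arbitrary: G rule: less_induct)
  case (less m)
  show ?case
  proof (cases m)
    case 0
    then show ?thesis
      by (simp add: stat_sum0_def stat_sum_0 exc_0 fixpts_0)
  next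
    case (Suc n)
    then show ?thesis
      using less stat_sum_exc_fixpts_decomp_Suc[of n G] by simp
  qed
qed

lemma derangement_sum_Suc:
  "derangement_sum (Suc k) g = derangement_sum k (\<lambda>e. real e * g e + (real k - real e) * g (e + 1))
     + real k * derangement_sum (k - 1) (\<lambda>e. g (e + 1))"
  by (rule derangement_sum_Suc_if_decomp[OF stat_sum_exc_fixpts_decomp])

lemma no_succ_sum_Suc_Suc_if_decomp:
  assumes decomp: "\<And>G. stat_sum asc succs (Suc m) G
      = (\<Sum>j\<le>m. real (m choose j) * no_succ_sum (Suc m - j) (\<lambda>a. G (a + j) j))"
  shows "no_succ_sum (Suc (Suc m)) g = no_succ_sum (Suc m) (\<lambda>a. (1 + real a) * g a + (real m - real a) * g (a + 1))
           + real m * no_succ_sum m (\<lambda>a. g (a + 1))"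
proof -
  have "no_succ_sum (Suc (Suc m)) g = stat_sum asc succs (Suc m) (\<lambda>a s. (if s = 1 then g a else 0)
          + (if s = 0 then (1 + real a) * g a + (real m - real a) * g (a + 1) else 0))"
    unfolding stat_sum0_def
    by (subst stat_sum_asc_succs_Suc) (auto intro!: arg_cong[where f="stat_sum asc succs (Suc m)"] simp: fun_eq_iff)
  also have "\<dots> = stat_sum asc succs (Suc m) (\<lambda>a s. if s = 1 then g a else 0)
          + no_succ_sum (Suc m) (\<lambda>a. (1 + real a) * g a + (real m - real a) * g (a + 1))"
    unfolding stat_sum0_def by (rule stat_sum_add)
  also have "stat_sum asc succs (Suc m) (\<lambda>a s. if s = 1 then g a else 0)
      = (\<Sum>j\<le>m. real (m choose j) * no_succ_sum (Suc m - j) (\<lambda>a. if j = 1 then g (a + j) else 0))"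
    by (rule decomp)
  also have "\<dots> = (\<Sum>j\<le>m. if j = 1 then real (m choose j) * no_succ_sum (Suc m - j) (\<lambda>a. g (a + 1)) else 0)"
    by (intro sum.cong refl) (auto simp: stat_sum0_if)
  also have "\<dots> = real m * no_succ_sum m (\<lambda>a. g (a + 1))"
    by (cases m) (simp_all add: sum.delta')
  finally show ?thesis
    by linarith
qed

lemma stat_sum_asc_succs_decomp_Suc:
  fixes G :: "nat \<Rightarrow> nat \<Rightarrow> real"
  assumes decomp: "\<And>m G. m \<le> n \<Longrightarrow> stat_sum asc succs (Suc m) G
      = (\<Sum>j\<le>m. real (m choose j) * no_succ_sum (Suc m - j) (\<lambda>a. G (a + j) j))"
  shows "stat_sum asc succs (Suc (Suc n)) G
      = (\<Sum>j\<le>Suc n. real (Suc n choose j) * no_succ_sum (Suc (Suc n) - j) (\<lambda>a. G (a + j) j))"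
proof -
  define h where "h j = no_succ_sum (n - j) (\<lambda>a. G (a + 1 + j) j)" for j
  define D where "D j = no_succ_sum (Suc (Suc n) - j) (\<lambda>a. G (a + j) j)" for j
  have summand: "no_succ_sum (Suc n - j) (\<lambda>a. (1 + real (a + j) - real j) * G (a + j) j
        + real j * G (a + j) (j - 1) + (real (Suc n) - 1 - real (a + j)) * G (a + j + 1) j + G (a + j + 1) (j + 1))
      = D j + D (Suc j) + (real j * h (j - 1) - real (n - j) * h j)" if j: "j \<le> n" for j
  proof -
    have "(\<lambda>a. (1 + real (a + j) - real j) * G (a + j) j + real j * G (a + j) (j - 1)
            + (real (Suc n) - 1 - real (a + j)) * G (a + j + 1) j + G (a + j + 1) (j + 1))
        = (\<lambda>a. ((1 + real a) * G (a + j) j + (real (n - j) - real a) * G (a + j + 1) j)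
            + (real j * G (a + j) (j - 1) + G (a + Suc j) (Suc j)))"
      using j by (auto simp: fun_eq_iff of_nat_diff algebra_simps)
    moreover have "real j * no_succ_sum (Suc (n - j)) (\<lambda>a. G (a + j) (j - 1)) = real j * h (j - 1)"
      using j by (cases j) (simp_all add: h_def Suc_diff_Suc)
    moreover have "Suc n - j = Suc (n - j)" "Suc (Suc n) - j = Suc (Suc (n - j))"
      using j by simp_all
    ultimately show ?thesis
      using no_succ_sum_Suc_Suc_if_decomp[OF decomp[of "n - j"], of "\<lambda>a. G (a + j) j"]
      by (simp add: stat_sum0_add stat_sum0_cmult D_def h_def add_ac)
  qed
  have "stat_sum asc succs (Suc (Suc n)) G = stat_sum asc succs (Suc n) (\<lambda>a s. (1 + real a - real s) * G a s
      + real s * G a (s - 1) + (real (Suc n) - 1 - real a) * G (a + 1) s + G (a + 1) (s + 1))"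
    by (rule stat_sum_asc_succs_Suc) simp
  also have "\<dots> = (\<Sum>j\<le>n. real (n choose j) * no_succ_sum (Suc n - j) (\<lambda>a. (1 + real (a + j) - real j) * G (a + j) j
        + real j * G (a + j) (j - 1) + (real (Suc n) - 1 - real (a + j)) * G (a + j + 1) j + G (a + j + 1) (j + 1)))"
    by (rule decomp) simp
  also have "\<dots> = (\<Sum>j\<le>n. real (n choose j) * (D j + D (Suc j) + (real j * h (j - 1) - real (n - j) * h j)))"
    using summand by (intro sum.cong refl) simp
  also have "\<dots> = (\<Sum>j\<le>n. real (n choose j) * D j) + (\<Sum>j\<le>n. real (n choose j) * D (Suc j))
      + ((\<Sum>j\<le>n. real (n choose j) * (real j * h (j - 1))) - (\<Sum>j\<le>n. real (n choose j) * (real (n - j) * h j)))"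
    by (simp only: distrib_left right_diff_distrib sum.distrib sum_subtractf)
  also have "\<dots> = (\<Sum>j\<le>Suc n. real (Suc n choose j) * D j)"
    by (simp only: sum_choose_absorb_shift sum_Suc_choose_split diff_self add_0_right)
  finally show ?thesis
    by (simp add: D_def)
qed

text \<open>Contracting each maximal run of successions to one letter turns a permutation of \<open>Suc m\<close> letters
  with \<open>j\<close> successions into a succession-free one of \<open>Suc m - j\<close> letters; each contracted succession was
  an ascent.\<close>

lemma stat_sum_asc_succs_decomp:
  "stat_sum asc succs (Suc m) G = (\<Sum>j\<le>m. real (m choose j) * no_succ_sum (Suc m - j) (\<lambda>a. G (a + j) j))"
proof (induction m arbitrary: G rule: less_induct)
  case (less m)
  show ?case
  proof (cases m)
    case 0
    then show ?thesis
      by (simp add: stat_sum0_def stat_sum_1 asc_1 succs_1)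
  next
    case (Suc n)
    then show ?thesis
      using less stat_sum_asc_succs_decomp_Suc[of n G] by simp
  qed
qed

lemma no_succ_sum_Suc_Suc:
  "no_succ_sum (Suc (Suc m)) g = no_succ_sum (Suc m) (\<lambda>a. (1 + real a) * g a + (real m - real a) * g (a + 1))
     + real m * no_succ_sum m (\<lambda>a. g (a + 1))"
  by (rule no_succ_sum_Suc_Suc_if_decomp[OF stat_sum_asc_succs_decomp])

lemma derangement_sum_0: "derangement_sum 0 g = g 0"
  by (simp add: stat_sum0_def stat_sum_0 exc_0 fixpts_0)

lemma derangement_sum_1: "derangement_sum (Suc 0) g = 0"
proof -
  have "fixpts (Suc 0) id = 1"
    by (simp add: fixpts_def)
  then show ?thesis
    by (simp add: stat_sum0_def stat_sum_1)
qed

lemma no_succ_sum_1: "no_succ_sum (Suc 0) g = g 0"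
  by (simp add: stat_sum0_def stat_sum_1 asc_1 succs_1)

lemma exc_pos_if_derangement:
  assumes "p permutes {1..k}" "k \<ge> 1" "fixpts k p = 0"
  shows "exc k p > 0"
proof -
  have "p 1 \<noteq> 1"
    using assms by (auto simp: fixpts_def)
  moreover have "p 1 \<in> {1..k}"
    using assms permutes_in_image[of p "{1..k}" 1] by simp
  ultimately have "1 \<in> {i \<in> {1..k}. p i > i}"
    using assms by simp
  then show ?thesis
    unfolding exc_def by (subst card_gt_0_iff) auto
qed

lemma derangement_sum_cong:
  assumes "k \<ge> 1" "\<And>e. e \<ge> 1 \<Longrightarrow> g e = h e"
  shows "derangement_sum k g = derangement_sum k h"
  unfolding stat_sum0_eq_sum
  using assms exc_pos_if_derangement by (intro sum.cong) (auto simp: perms_def Suc_le_eq)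

lemma no_succ_sum_eq_derangement_sums:
  "no_succ_sum (Suc m) g = derangement_sum (Suc m) (\<lambda>e. g (e - 1)) + derangement_sum m g"
proof (induction m arbitrary: g rule: induct_nat_012)
  case 0
  show ?case
    by (simp add: no_succ_sum_1 derangement_sum_0 derangement_sum_1)
next
  case 1
  show ?case
    using no_succ_sum_Suc_Suc[of 0 g] derangement_sum_Suc[of "Suc 0" "\<lambda>e. g (e - 1)"]
    by (simp add: no_succ_sum_1 derangement_sum_0 derangement_sum_1)
next
  case (ge2 k)
  define H where "H a = (1 + real a) * g a + (real (Suc k) - real a) * g (a + 1)" for a
  have "no_succ_sum (Suc (Suc (Suc k))) g = no_succ_sum (Suc (Suc k)) H + real (Suc k) * no_succ_sum (Suc k) (\<lambda>a. g (a + 1))"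
    unfolding H_def by (rule no_succ_sum_Suc_Suc)
  also have "no_succ_sum (Suc (Suc k)) H = derangement_sum (Suc (Suc k)) (\<lambda>e. H (e - 1)) + derangement_sum (Suc k) H"
    by (rule ge2.IH(2))
  also have "derangement_sum (Suc (Suc k)) (\<lambda>e. H (e - 1))
      = derangement_sum (Suc (Suc k)) (\<lambda>e. real e * g (e - 1) + (real (Suc (Suc k)) - real e) * g e)"
    by (rule derangement_sum_cong) (auto simp: H_def of_nat_diff algebra_simps)
  also have "derangement_sum (Suc k) H
      = derangement_sum (Suc k) (\<lambda>e. real e * g e + (real (Suc k) - real e) * g (e + 1)) + derangement_sum (Suc k) g"
    unfolding H_def stat_sum0_add[symmetric] by (rule arg_cong[where f="derangement_sum (Suc k)"]) (auto simp: algebra_simps)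
  also have "no_succ_sum (Suc k) (\<lambda>a. g (a + 1)) = derangement_sum (Suc k) g + derangement_sum k (\<lambda>e. g (e + 1))"
    using ge2.IH(1)[of "\<lambda>a. g (a + 1)"] derangement_sum_cong[of "Suc k" "\<lambda>e. g (e - 1 + 1)" g] by simp
  finally show ?case
    using derangement_sum_Suc[of "Suc (Suc k)" "\<lambda>e. g (e - 1)"] derangement_sum_Suc[of "Suc k" g]
    by (simp add: algebra_simps)
qed

lemma derangement_poly_eq_derangement_sum: "derangement_poly n x = derangement_sum n (\<lambda>e. x ^ e)"
proof -
  have "{p. p permutes {1..n} \<and> (\<forall>i \<in> {1..n}. p i \<noteq> i)} = {p \<in> perms n. fixpts n p = 0}"
    by (auto simp: perms_def fixpts_def)
  then show ?thesis
    by (simp add: derangement_poly_def stat_sum0_eq_sum)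
qed

lemma sum_no_succession_eq_no_succ_sum:
  "(\<Sum>p \<in> {p. p permutes {1..m} \<and> no_succession m p}. x ^ asc m p) = no_succ_sum m (\<lambda>a. x ^ a)"
proof -
  have "{p. p permutes {1..m} \<and> no_succession m p} = {p \<in> perms m. succs m p = 0}"
    by (auto simp: perms_def succs_def no_succession_def)
  then show ?thesis
    by (simp add: stat_sum0_eq_sum)
qed

text \<open>\<open>e + f\<close> counts the weak excedances \<open>i \<le> p i\<close>.\<close>

lemma stat_sum_weak_exc_eq_exc_Suc:
  "stat_sum exc fixpts (Suc n) (\<lambda>e f. g (e + f)) = stat_sum exc fixpts (Suc n) (\<lambda>e f. g (e + 1))"
proof (induction n arbitrary: g)
  case 0
  show ?case
    by (simp add: stat_sum_exc_fixpts_Suc stat_sum_0 exc_0 fixpts_0)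
next
  case (Suc n)
  define h where "h s = real s * g s + (real (Suc n) + 1 - real s) * g (s + 1)" for s
  have "stat_sum exc fixpts (Suc (Suc n)) (\<lambda>e f. g (e + f)) = stat_sum exc fixpts (Suc n) (\<lambda>e f. h (e + f))"
    unfolding stat_sum_exc_fixpts_Suc[of "Suc n"]
    by (rule arg_cong[where f="stat_sum exc fixpts (Suc n)"])
      (auto simp: fun_eq_iff h_def algebra_simps split: nat_diff_split)
  also have "\<dots> = stat_sum exc fixpts (Suc n) (\<lambda>e f. h (e + 1))"
    by (rule Suc.IH)
  also have "\<dots> = stat_sum exc fixpts (Suc (Suc n)) (\<lambda>e f. g (e + 1))"
    unfolding stat_sum_exc_fixpts_Suc[of "Suc n"]
    by (rule arg_cong[where f="stat_sum exc fixpts (Suc n)"]) (auto simp: fun_eq_iff h_def algebra_simps)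
  finally show ?case .
qed

lemma sum_choose_derangement_poly_pow:
  fixes x :: real
  assumes "m \<ge> 1"
  shows "(\<Sum>k\<le>m. real (m choose k) * derangement_poly k x * x ^ (m - k))
       = x * (\<Sum>k\<le>m. real (m choose k) * derangement_poly k x)"
proof -
  have shift: "derangement_sum k (\<lambda>e. x ^ (e + j)) = x ^ j * derangement_poly k x" for k j
    using stat_sum0_cmult[of exc fixpts k "x ^ j" "\<lambda>e. x ^ e"]
    by (simp add: derangement_poly_eq_derangement_sum power_add mult.commute)
  have "(\<Sum>k\<le>m. real (m choose k) * derangement_poly k x * x ^ (m - k)) = stat_sum exc fixpts m (\<lambda>e f. x ^ (e + f))"
    unfolding stat_sum_exc_fixpts_decomp shift by (simp add: mult_ac)
  also have "\<dots> = stat_sum exc fixpts m (\<lambda>e f. x ^ (e + 1))"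
    using assms stat_sum_weak_exc_eq_exc_Suc[of "m - 1"] by simp
  also have "\<dots> = x * (\<Sum>k\<le>m. real (m choose k) * derangement_poly k x)"
    unfolding stat_sum_exc_fixpts_decomp shift by (simp add: sum_distrib_left mult_ac)
  finally show ?thesis .
qed

definition derangement_egf :: "real \<Rightarrow> real fps" where
  "derangement_egf x = Abs_fps (\<lambda>n. derangement_poly n x / fact n)"

lemma derangement_egf_mult_denom:
  "derangement_egf x * (fps_exp x - fps_const x * fps_exp 1) = fps_const (1 - x)"
proof (rule fps_ext)
  fix m
  define d where "d k = derangement_poly k x" for k
  have denom_nth: "fps_nth (fps_exp x - fps_const x * fps_exp 1) j = (x ^ j - x) / fact j" for j
    by (simp add: diff_divide_distrib)
  have "fps_nth (derangement_egf x * (fps_exp x - fps_const x * fps_exp 1)) m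
      = (\<Sum>i\<le>m. d i / fact i * ((x ^ (m - i) - x) / fact (m - i)))"
    unfolding fps_mult_nth denom_nth by (simp add: derangement_egf_def d_def atLeast0AtMost)
  also have "\<dots> = (\<Sum>i\<le>m. real (m choose i) * d i * (x ^ (m - i) - x)) / fact m"
    unfolding sum_divide_distrib
    by (intro sum.cong refl) (simp add: binomial_fact field_simps)
  also have "\<dots> = fps_nth (fps_const (1 - x)) m"
  proof (cases "m = 0")
    case True
    then show ?thesis
      by (simp add: d_def derangement_poly_eq_derangement_sum derangement_sum_0)
  next
    case False
    then have "(\<Sum>i\<le>m. real (m choose i) * d i * (x ^ (m - i) - x)) = 0"
      using sum_choose_derangement_poly_pow[of m x]
      by (simp add: d_def right_diff_distrib sum_subtractf sum_distrib_left mult_ac)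
    with False show ?thesis
      by simp
  qed
  finally show "fps_nth (derangement_egf x * (fps_exp x - fps_const x * fps_exp 1)) m = fps_nth (fps_const (1 - x)) m" .
qed

lemma derangement_egf_ode:
  fixes x :: real
  assumes "x \<noteq> 1"
  defines "D \<equiv> derangement_egf x"
  shows "fps_deriv D + fps_const x * D = fps_const x * D\<^sup>2 * fps_exp 1"
proof -
  define X where "X = fps_const x"
  define den where "den = fps_exp x - X * fps_exp 1"
  have D_den: "D * den = 1 - X"
    using derangement_egf_mult_denom[of x] by (simp add: D_def den_def X_def flip: fps_const_sub)
  have "fps_deriv D * den + D * (X * (fps_exp x - fps_exp 1)) = 0"
  proof -
    have "fps_deriv (D * den) = 0"
      using D_den by (simp add: X_def)
    moreover have "fps_deriv den = X * (fps_exp x - fps_exp 1)"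
      by (simp add: den_def X_def algebra_simps)
    ultimately show ?thesis
      by (simp add: algebra_simps)
  qed
  then have "(fps_deriv D + X * D) * den = (X * D\<^sup>2 * fps_exp 1) * den"
    using D_den unfolding den_def power2_eq_square by algebra
  moreover have "den \<noteq> 0"
  proof
    assume "den = 0"
    then have "fps_nth den 0 = 0"
      by simp
    with assms show False
      by (simp add: den_def X_def)
  qed
  ultimately show ?thesis
    unfolding X_def by simp
qed

lemma dB_half_eq_coeff:
  assumes "x \<noteq> 1"
  shows "dB_half n x = fact n * fps_nth ((derangement_egf x)\<^sup>2 * fps_exp 1) n"
proof -
  define den where "den = fps_exp x - fps_const x * fps_exp (1::real)"
  have "fps_nth den 0 \<noteq> 0"
    using assms by (simp add: den_def)
  then have "fps_const (1 - x) * fps_exp (1/2) / den = derangement_egf x * fps_exp (1/2) * (den * inverse den)"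
    by (simp add: fps_divide_unit derangement_egf_mult_denom[of x, folded den_def, symmetric] mult_ac)
  also have "den * inverse den = 1"
    using \<open>fps_nth den 0 \<noteq> 0\<close> by (rule inverse_mult_eq_1')
  finally have "(fps_const (1 - x) * fps_exp (1/2) / den)\<^sup>2 = (derangement_egf x)\<^sup>2 * (fps_exp (1/2))\<^sup>2"
    by (simp add: power_mult_distrib)
  also have "(fps_exp (1/2))\<^sup>2 = (fps_exp 1 :: real fps)"
    by (simp add: power2_eq_square fps_exp_add_mult[symmetric])
  finally show ?thesis
    by (simp add: dB_half_def den_def)
qed

lemma dB_half_eq_derangement_polys:
  assumes "x \<noteq> 0" "x \<noteq> 1"
  shows "dB_half n x = derangement_poly (Suc n) x / x + derangement_poly n x"
proof -
  have "fps_nth (fps_deriv (derangement_egf x) + fps_const x * derangement_egf x) n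
      = x * fps_nth ((derangement_egf x)\<^sup>2 * fps_exp 1) n"
    using derangement_egf_ode[OF assms(2)] by (simp add: mult.assoc)
  moreover have "fps_nth (fps_deriv (derangement_egf x) + fps_const x * derangement_egf x) n
      = (derangement_poly (Suc n) x + x * derangement_poly n x) / fact n"
    by (simp add: derangement_egf_def field_simps del: of_nat_Suc)
  ultimately show ?thesis
    using assms(1) by (simp add: dB_half_eq_coeff[OF assms(2)] field_simps)
qed

lemma dB_half_0: "dB_half n 0 = 1"
proof -
  have "(fps_const (1 - 0) * fps_exp (1/2) / (fps_exp 0 - fps_const 0 * fps_exp 1))\<^sup>2 = (fps_exp (1::real))"
    by (simp add: power2_eq_square fps_exp_add_mult[symmetric])
  then show ?thesis
    by (simp add: dB_half_def)
qed

lemma derangement_sum_pow_pred: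
  assumes "x \<noteq> 0" "m \<ge> 1"
  shows "derangement_sum m (\<lambda>e. x ^ (e - 1)) = derangement_poly m x / x"
proof -
  have "derangement_sum m (\<lambda>e. x ^ (e - 1)) = derangement_sum m (\<lambda>e. (1 / x) * x ^ e)"
    using assms by (intro derangement_sum_cong) (auto simp: power_diff)
  then show ?thesis
    using stat_sum0_cmult[of exc fixpts m "1 / x" "\<lambda>e. x ^ e"] by (simp add: derangement_poly_eq_derangement_sum)
qed

lemma derangement_poly_at_0: "n \<ge> 1 \<Longrightarrow> derangement_poly n 0 = 0"
  using derangement_sum_cong[of n "\<lambda>e. 0 ^ e" "\<lambda>e. 0"]
  by (simp add: derangement_poly_eq_derangement_sum stat_sum0_zero)

lemma derangement_sum_single_exc:
  "k \<ge> 1 \<Longrightarrow> derangement_sum (Suc k) (\<lambda>e. if e = 1 then 1 else 0) = 1"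
proof (induction k rule: dec_induct)
  case base
  show ?case
    using derangement_sum_Suc[of 1 "\<lambda>e. if e = 1 then 1 else 0"] by (simp add: derangement_sum_0 derangement_sum_1)
next
  case (step k)
  have "derangement_sum (Suc k) (\<lambda>e. real e * (if e = 1 then 1 else 0) + (real (Suc k) - real e) * (if e + 1 = 1 then 1 else 0))
      = derangement_sum (Suc k) (\<lambda>e. if e = 1 then 1 else 0)"
    by (intro derangement_sum_cong) auto
  moreover have "derangement_sum k (\<lambda>e. if e + 1 = 1 then 1 else 0) = 0"
    using step derangement_sum_cong[of k "\<lambda>e. if e + 1 = 1 then 1 else 0" "\<lambda>e. 0"] by (simp add: stat_sum0_zero)
  ultimately show ?case
    using derangement_sum_Suc[of "Suc k" "\<lambda>e. if e = 1 then 1 else 0"] step.IH by simp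
qed

lemma derangement_sum_zero_pow_pred:
  assumes "k \<ge> 1"
  shows "derangement_sum (Suc k) (\<lambda>e. 0 ^ (e - 1)) = 1"
proof -
  have "derangement_sum (Suc k) (\<lambda>e. 0 ^ (e - 1)) = derangement_sum (Suc k) (\<lambda>e. if e = 1 then 1 else 0)"
    by (intro derangement_sum_cong) auto
  then show ?thesis
    using derangement_sum_single_exc[OF assms] by simp
qed

theorem theorem15:
  fixes n :: nat and x :: real
  assumes "n \<ge> 1" and "x \<noteq> 1"
  shows "(x \<noteq> 0 \<longrightarrow> dB_half n x = derangement_poly (n + 1) x / x + derangement_poly n x)
       \<and> dB_half n x = (\<Sum>p \<in> {p. p permutes {1..n+1} \<and> no_succession (n + 1) p}. x ^ asc (n + 1) p)"
proof -
  have no_succ: "(\<Sum>p \<in> {p. p permutes {1..n+1} \<and> no_succession (n + 1) p}. x ^ asc (n + 1) p)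
      = derangement_sum (Suc n) (\<lambda>e. x ^ (e - 1)) + derangement_poly n x"
    using sum_no_succession_eq_no_succ_sum[where m = "n + 1" and x = x] no_succ_sum_eq_derangement_sums[of n "\<lambda>a. x ^ a"]
      derangement_poly_eq_derangement_sum[of n x] by simp
  show ?thesis
  proof (cases "x = 0")
    case True
    then show ?thesis
      using assms no_succ derangement_sum_zero_pow_pred[OF assms(1)] by (simp add: dB_half_0 derangement_poly_at_0)
  next
    case False
    then show ?thesis
      using assms no_succ derangement_sum_pow_pred[OF False, of "Suc n"] by (simp add: dB_half_eq_derangement_polys)
  qed
qed

end
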